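(* For every instance such that $|S_2|>\pi_1+\pi_3+\pi_4-1$, $|S_2|\ge 3$ and $|S_2|$ is odd, we have $H^{PW''}\le \tfrac{24}{13}H^*$.
   Context: An instance consists of an integer $n\ge 1$ and growth rates $1=h(1)\ge h(2)\ge\cdots\ge h(n)>0$ of bamboos $b_1,\dots,b_n$. Bamboo Garden Trimming (discrete version): - All heights are $0$ initially. - On each day $t=1,2,\dots$ every bamboo $b_j$ grows by $h(j)$. - At the end of each day the gardener cuts exactly one bamboo $\sigma(t)\in\{1,\dots,n\}$ back to height $0$. The height of a schedule $\sigma:\mathbb{N}\to\{1,\dots,n\}$ is the supremum, over all days $t$ and all $j$, of the height of $b_j$ at the end of day $t$ just before the cut. $H^*$ denotes the infimum of this height over all schedules. Value of algorithm PW'': - Split $\{1,\dots,n\}$ into four sets: - $S_1=\{j: \tfrac23<h(j)\le 1\}$; - $S_2=\{j:\tfrac12<h(j)\le\tfrac23\}$; - $S_3=\{j: h(j)\le\tfrac12 \text{ and } \tfrac23 2^{-k}<h(j)\le 2^{-k}\text{ for some integer }k\ge1\}$; - $S_4=\{j: h(j)\le\tfrac12\text{ and } 2^{-(k+1)}<h(j)\le \tfrac23 2^{-k}\text{ for some integer }k\ge 1\}$. - Modified growths: $h''(j)=2^{-k}$ for $j\in S_3$ and $h''(j)=\tfrac23 2^{-k}$ for $j\in S_4$, with $k$ as in the definition of the set. - Let $\pi_1=|S_1|$, $sh_3=\sum_{j\in S_3}h''(j)$, $sh_4=\sum_{j\in S_4}h''(j)$, $\pi_3=\lfloor sh_3\rfloor$,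 $\pi_4=\lfloor sh_4\rfloor$, $f_3=sh_3-\pi_3$, $f_4=sh_4-\pi_4$. - Option (a): $\pi_R(a)=\lceil f_3+f_4\rceil$ and $z(a)=\pi_1+|S_2|+\pi_3+\pi_4+\pi_R(a)$. - Option (b): if $S_2=\emptyset$ put $z(b)=+\infty$. Otherwise let $h^*=\max_{j\in S_2}h(j)$ and $f_2=\tfrac12$ if $|S_2|$ is odd, $f_2=0$ if $|S_2|$ is even. Then $\pi_R(b)=\lceil f_2+f_3+f_4\rceil$ and $z(b)=2h^*\,(\pi_1+\lfloor |S_2|/2\rfloor+\pi_3+\pi_4+\pi_R(b))$. - The value returned by algorithm PW'' is $H^{PW''}=\min\{z(a),z(b)\}$. The paper takes this as the maximum height of the periodic pinwheel trimming schedule that it builds from these partitions. *)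

theory Defs
  imports Complex_Main "HOL-Library.Extended_Real"
begin

definition bgt_instance :: "nat \<Rightarrow> (nat \<Rightarrow> real) \<Rightarrow> bool" where
  "bgt_instance n h \<longleftrightarrow> n \<ge> 1 \<and> h 1 = 1 \<and>
     (\<forall>i j. 1 \<le> i \<longrightarrow> i \<le> j \<longrightarrow> j \<le> n \<longrightarrow> h j \<le> h i) \<and> h n > 0"

definition schedule :: "nat \<Rightarrow> (nat \<Rightarrow> nat) \<Rightarrow> bool" where
  "schedule n \<sigma> \<longleftrightarrow> (\<forall>t\<ge>1. \<sigma> t \<in> {1..n})"

definition last_cut :: "(nat \<Rightarrow> nat) \<Rightarrow> nat \<Rightarrow> nat \<Rightarrow> nat" where
  "last_cut \<sigma> j t = Max ({s. 1 \<le> s \<and> s < t \<and> \<sigma> s = j} \<union> {0})"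

text \<open>Height of bamboo j at the end of day t, just before the cut of day t.\<close>
definition height :: "(nat \<Rightarrow> real) \<Rightarrow> (nat \<Rightarrow> nat) \<Rightarrow> nat \<Rightarrow> nat \<Rightarrow> real" where
  "height h \<sigma> j t = h j * real (t - last_cut \<sigma> j t)"

definition sched_height :: "nat \<Rightarrow> (nat \<Rightarrow> real) \<Rightarrow> (nat \<Rightarrow> nat) \<Rightarrow> ereal" where
  "sched_height n h \<sigma> = (SUP p \<in> {p. 1 \<le> fst p \<and> 1 \<le> snd p \<and> snd p \<le> n}.
                            ereal (height h \<sigma> (snd p) (fst p)))"

definition Hstar :: "nat \<Rightarrow> (nat \<Rightarrow> real) \<Rightarrow> ereal" where
  "Hstar n h = (INF \<sigma> \<in> {\<sigma>. schedule n \<sigma>}. sched_height n h \<sigma>)"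

definition S1 :: "nat \<Rightarrow> (nat \<Rightarrow> real) \<Rightarrow> nat set" where
  "S1 n h = {j \<in> {1..n}. 2/3 < h j \<and> h j \<le> 1}"
definition S2 :: "nat \<Rightarrow> (nat \<Rightarrow> real) \<Rightarrow> nat set" where
  "S2 n h = {j \<in> {1..n}. 1/2 < h j \<and> h j \<le> 2/3}"
definition S3 :: "nat \<Rightarrow> (nat \<Rightarrow> real) \<Rightarrow> nat set" where
  "S3 n h = {j \<in> {1..n}. h j \<le> 1/2 \<and>
     (\<exists>k::nat. k \<ge> 1 \<and> 2/3 * (1/2)^k < h j \<and> h j \<le> (1/2)^k)}"
definition S4 :: "nat \<Rightarrow> (nat \<Rightarrow> real) \<Rightarrow> nat set" where
  "S4 n h = {j \<in> {1..n}. h j \<le> 1/2 \<and>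
     (\<exists>k::nat. k \<ge> 1 \<and> (1/2)^(k+1) < h j \<and> h j \<le> 2/3 * (1/2)^k)}"

definition h3 :: "(nat \<Rightarrow> real) \<Rightarrow> nat \<Rightarrow> real" where
  "h3 h j = (1/2) ^ (THE k::nat. k \<ge> 1 \<and> 2/3 * (1/2)^k < h j \<and> h j \<le> (1/2)^k)"
definition h4 :: "(nat \<Rightarrow> real) \<Rightarrow> nat \<Rightarrow> real" where
  "h4 h j = 2/3 * (1/2) ^ (THE k::nat. k \<ge> 1 \<and> (1/2)^(k+1) < h j \<and> h j \<le> 2/3 * (1/2)^k)"

definition sh3 :: "nat \<Rightarrow> (nat \<Rightarrow> real) \<Rightarrow> real" where
  "sh3 n h = (\<Sum>j\<in>S3 n h. h3 h j)"
definition sh4 :: "nat \<Rightarrow> (nat \<Rightarrow> real) \<Rightarrow> real" where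
  "sh4 n h = (\<Sum>j\<in>S4 n h. h4 h j)"

definition pi1 :: "nat \<Rightarrow> (nat \<Rightarrow> real) \<Rightarrow> int" where "pi1 n h = int (card (S1 n h))"
definition pi3 :: "nat \<Rightarrow> (nat \<Rightarrow> real) \<Rightarrow> int" where "pi3 n h = \<lfloor>sh3 n h\<rfloor>"
definition pi4 :: "nat \<Rightarrow> (nat \<Rightarrow> real) \<Rightarrow> int" where "pi4 n h = \<lfloor>sh4 n h\<rfloor>"
definition f3 :: "nat \<Rightarrow> (nat \<Rightarrow> real) \<Rightarrow> real" where "f3 n h = sh3 n h - pi3 n h"
definition f4 :: "nat \<Rightarrow> (nat \<Rightarrow> real) \<Rightarrow> real" where "f4 n h = sh4 n h - pi4 n h"

definition z_a :: "nat \<Rightarrow> (nat \<Rightarrow> real) \<Rightarrow> real" where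
  "z_a n h = real_of_int (pi1 n h + int (card (S2 n h)) + pi3 n h + pi4 n h
                          + \<lceil>f3 n h + f4 n h\<rceil>)"

definition z_b :: "nat \<Rightarrow> (nat \<Rightarrow> real) \<Rightarrow> ereal" where
  "z_b n h = (if S2 n h = {} then \<infinity> else
     (let hs = Max (h ` S2 n h);
          f2 = (if odd (card (S2 n h)) then 1/2 else (0::real))
      in ereal (2 * hs * real_of_int (pi1 n h + int (card (S2 n h) div 2) + pi3 n h + pi4 n h
                                       + \<lceil>f2 + f3 n h + f4 n h\<rceil>))))"

definition H_PW :: "nat \<Rightarrow> (nat \<Rightarrow> real) \<Rightarrow> ereal" where
  "H_PW n h = min (ereal (z_a n h)) (z_b n h)"

end

theory Submission
  imports Defs
begin

text \<open>
  Lower bound: if no bamboo ever exceeds height H, bamboo j is cut at least once in every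
  \<lfloor>H / h(j)\<rfloor> consecutive days, so it occupies a fraction h(j)/H of all days; these fractions
  sum to at most one, whence H^* \<ge> \<Sigma>_j h(j).
  Upper bound: summing h class by class (h(1) = 1 in S_1, h > 2/3 on S_1, h > 1/2 on S_2 with
  maximum h^*, and h'' \<le> 3/2 h on S_3 \<union> S_4) bounds \<Sigma>_j h(j) from below in terms of
  \<pi>_1, |S_2|, h^*, \<pi>_3 + \<pi>_4 and f_3 + f_4, and a case analysis on which of z(a), z(b) is
  smaller gives the factor 24/13.
\<close>

lemma last_cut_cases:
  "last_cut \<sigma> j t = 0 \<or> (1 \<le> last_cut \<sigma> j t \<and> last_cut \<sigma> j t < t \<and> \<sigma> (last_cut \<sigma> j t) = j)"
proof -
  have "finite ({s. 1 \<le> s \<and> s < t \<and> \<sigma> s = j} \<union> {0})"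
    by (rule finite_subset[of _ "{..t}"]) auto
  from Max_in[OF this] show ?thesis
    unfolding last_cut_def by auto
qed

lemma last_cut_le: "last_cut \<sigma> j t \<le> t"
  using last_cut_cases[of \<sigma> j t] by auto

lemma height_first_day: "height h \<sigma> j 1 = h j"
proof -
  have "last_cut \<sigma> j 1 = 0"
    using last_cut_cases[of \<sigma> j 1] by auto
  thus ?thesis unfolding height_def by simp
qed

lemma cut_in_window:
  assumes bound: "\<forall>t\<ge>1. height h \<sigma> j t \<le> H" and hj: "h j > 0" and a: "a \<ge> 1"
  shows "\<exists>s. a \<le> s \<and> s < a + nat \<lfloor>H / h j\<rfloor> \<and> \<sigma> s = j"
proof -
  define t where "t = a + nat \<lfloor>H / h j\<rfloor>"
  define lc where "lc = last_cut \<sigma> j t"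
  have "h j * real (t - lc) \<le> H"
    using bound a unfolding t_def lc_def height_def by auto
  hence "real (t - lc) \<le> H / h j"
    using hj by (simp add: field_simps mult.commute)
  hence "int (t - lc) \<le> \<lfloor>H / h j\<rfloor>"
    by (simp add: le_floor_iff)
  hence gap: "t - lc \<le> nat \<lfloor>H / h j\<rfloor>"
    by linarith
  hence "lc \<noteq> 0"
    unfolding t_def using a by auto
  hence "lc < t \<and> \<sigma> lc = j"
    using last_cut_cases[of \<sigma> j t] unfolding lc_def by auto
  moreover have "a \<le> lc"
    using gap last_cut_le[of \<sigma> j t] unfolding t_def lc_def by auto
  ultimately show ?thesis
    unfolding t_def by auto
qed

lemma card_cuts_ge:
  assumes bound: "\<forall>t\<ge>1. height h \<sigma> j t \<le> H" and hj: "h j > 0"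
  shows "real T * h j / H - 1 \<le> card {t \<in> {1..T}. \<sigma> t = j}"
proof -
  define l where "l = nat \<lfloor>H / h j\<rfloor>"
  have "height h \<sigma> j 1 \<le> H"
    using bound by blast
  hence "h j \<le> H"
    by (simp only: height_first_day)
  hence H: "H > 0" and "1 \<le> H / h j"
    using hj by auto
  hence l: "l \<ge> 1" and "real l \<le> H / h j"
    unfolding l_def by linarith+
  hence lH: "real l * h j \<le> H"
    using hj by (simp add: field_simps)
  define g where "g i = (SOME s. 1 + i*l \<le> s \<and> s < 1 + i*l + l \<and> \<sigma> s = j)" for i
  have g: "1 + i*l \<le> g i \<and> g i < 1 + i*l + l \<and> \<sigma> (g i) = j" for i
    unfolding g_def by (rule someI_ex) (use cut_in_window[OF bound hj, of "1+i*l"] in \<open>auto simp: l_def\<close>)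
  have "strict_mono g"
    unfolding strict_mono_Suc_iff
  proof
    fix i
    show "g i < g (Suc i)"
      using g[of i] g[of "Suc i"] by (simp add: algebra_simps)
  qed
  hence inj: "inj_on g {..<T div l}"
    by (simp add: strict_mono_imp_inj_on)
  have "g ` {..<T div l} \<subseteq> {t \<in> {1..T}. \<sigma> t = j}"
  proof
    fix y assume "y \<in> g ` {..<T div l}"
    then obtain i where i: "i < T div l" "y = g i"
      by auto
    have "(i+1)*l \<le> (T div l)*l"
      using i by (intro mult_right_mono) auto
    also have "\<dots> \<le> T"
      by simp
    finally show "y \<in> {t \<in> {1..T}. \<sigma> t = j}"
      using g[of i] i by (auto simp: algebra_simps)
  qed
  from card_inj_on_le[OF inj this] have cuts: "T div l \<le> card {t \<in> {1..T}. \<sigma> t = j}"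
    by simp
  have "real T = real l * real (T div l) + real (T mod l)"
    by (metis mult_div_mod_eq of_nat_add of_nat_mult)
  moreover have "real (T mod l) < real l"
    using l by simp
  ultimately have "real T < real l * (real (T div l) + 1)"
    by (simp add: algebra_simps)
  also have "\<dots> \<le> H / h j * (real (T div l) + 1)"
    using lH hj by (intro mult_right_mono) (auto simp: field_simps)
  finally have "real T * h j < H * (real (T div l) + 1)"
    using hj by (simp add: field_simps)
  hence "real T * h j / H - 1 < real (T div l)"
    using H by (simp add: field_simps)
  with cuts show ?thesis
    by linarith
qed

lemma schedule_cuts_partition:
  assumes "schedule n \<sigma>"
  shows "(\<Sum>j\<in>{1..n}. card {t \<in> {1..T}. \<sigma> t = j}) = T"
proof -
  have "\<sigma> ` {1..T} \<subseteq> {1..n}"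
    using assms unfolding schedule_def by auto
  from sum.group[OF _ _ this, of "\<lambda>_. 1::nat"] show ?thesis
    by (simp flip: card_eq_sum)
qed

lemma sum_rates_le_height_bound:
  assumes sched: "schedule n \<sigma>" and pos: "\<forall>j\<in>{1..n}. h j > 0"
    and bound: "\<forall>t\<ge>1. \<forall>j\<in>{1..n}. height h \<sigma> j t \<le> H"
  shows "(\<Sum>j\<in>{1..n}. h j) \<le> H"
proof (rule ccontr)
  define S where "S = (\<Sum>j\<in>{1..n}. h j)"
  assume "\<not> S \<le> H"
  have "\<sigma> 1 \<in> {1..n}"
    using sched unfolding schedule_def by simp
  hence "height h \<sigma> (\<sigma> 1) 1 \<le> H"
    using bound by blast
  hence "h (\<sigma> 1) \<le> H"
    by (simp only: height_first_day)
  hence H: "H > 0"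
    using pos \<open>\<sigma> 1 \<in> {1..n}\<close> by force
  have "real T * S / H - real n \<le> real T" for T
  proof -
    have "real T * S / H - real n = (\<Sum>j\<in>{1..n}. real T * h j / H - 1)"
      unfolding S_def by (simp add: sum_subtractf sum_divide_distrib sum_distrib_left)
    also have "\<dots> \<le> (\<Sum>j\<in>{1..n}. real (card {t \<in> {1..T}. \<sigma> t = j}))"
    proof (rule sum_mono)
      fix j assume "j \<in> {1..n}"
      with bound pos show "real T * h j / H - 1 \<le> real (card {t \<in> {1..T}. \<sigma> t = j})"
        by (intro card_cuts_ge) auto
    qed
    also have "\<dots> = real T"
      using schedule_cuts_partition[OF sched, of T] by (metis of_nat_sum)
    finally show ?thesis .
  qed
  hence "real T * (S - H) \<le> real n * H" for T
    using H by (simp add: field_simps)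
  moreover obtain T where "real n * H < real T * (S - H)"
    using reals_Archimedean3[of "S - H"] \<open>\<not> S \<le> H\<close> by auto
  ultimately show False
    by (meson not_le)
qed

lemma sum_rates_le_Hstar:
  assumes "\<forall>j\<in>{1..n}. h j > 0"
  shows "ereal (\<Sum>j\<in>{1..n}. h j) \<le> Hstar n h"
  unfolding Hstar_def
proof (rule INF_greatest)
  fix \<sigma> assume "\<sigma> \<in> {\<sigma>. schedule n \<sigma>}"
  hence sched: "schedule n \<sigma>"
    by simp
  show "ereal (\<Sum>j\<in>{1..n}. h j) \<le> sched_height n h \<sigma>"
  proof (rule ccontr)
    assume "\<not> ?thesis"
    then obtain r where r: "sched_height n h \<sigma> < ereal r" "r < (\<Sum>j\<in>{1..n}. h j)"
      using ereal_dense2 not_le by (metis ereal_less_eq(3))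
    have "height h \<sigma> j t \<le> r" if "1 \<le> t" "j \<in> {1..n}" for t j
    proof -
      have "(t, j) \<in> {p. 1 \<le> fst p \<and> 1 \<le> snd p \<and> snd p \<le> n}"
        using that by simp
      from SUP_upper[OF this, of "\<lambda>p. ereal (height h \<sigma> (snd p) (fst p))"]
      have "ereal (height h \<sigma> j t) \<le> sched_height n h \<sigma>"
        unfolding sched_height_def by simp
      also note r(1)
      finally show ?thesis
        by simp
    qed
    hence "(\<Sum>j\<in>{1..n}. h j) \<le> r"
      by (intro sum_rates_le_height_bound[OF sched assms]) simp
    with r(2) show False
      by simp
  qed
qed

lemma bgt_instance_rate_pos:
  assumes "bgt_instance n h" "j \<in> {1..n}"
  shows "0 < h j"
proof -
  have "\<forall>i j. 1 \<le> i \<longrightarrow> i \<le> j \<longrightarrow> j \<le> n \<longrightarrow> h j \<le> h i" "0 < h n"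
    using assms(1) unfolding bgt_instance_def by blast+
  moreover have "1 \<le> j" "j \<le> n"
    using assms(2) by auto
  ultimately show ?thesis
    by (meson order_less_le_trans order_refl)
qed

lemma dyadic_scale_unique:
  fixes y c d :: real
  assumes "0 < c" "d \<le> 2 * c"
    and "c * (1/2)^k < y" "y \<le> d * (1/2)^k"
    and "c * (1/2)^k' < y" "y \<le> d * (1/2)^k'"
  shows "k = k'"
proof -
  have smaller: "y \<le> c * (1/2)^a" if "c * (1/2)^a < y" "y \<le> d * (1/2)^b" "a < b" for a b
  proof -
    have "0 < c * (1/2)^a"
      using assms(1) by simp
    hence "0 < d * (1/2)^b"
      using that(1,2) by linarith
    hence "0 < d"
      by (simp add: zero_less_mult_iff)
    have "(1/2::real)^b \<le> (1/2)^Suc a"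
      using \<open>a < b\<close> by (intro power_decreasing) auto
    hence "d * (1/2)^b \<le> d * ((1/2)^a / 2)"
      using \<open>0 < d\<close> by (intro mult_left_mono) auto
    also have "\<dots> \<le> c * (1/2)^a"
      using assms(2) by (simp add: field_simps)
    finally show ?thesis
      using that(2) by linarith
  qed
  consider "k < k'" | "k = k'" | "k' < k"
    by linarith
  thus ?thesis
  proof cases
    case 1
    from smaller[OF assms(3,6) 1] assms(3) show ?thesis
      by linarith
  next
    case 3
    from smaller[OF assms(5,4) 3] assms(5) show ?thesis
      by linarith
  qed simp
qed

lemma S3_S4_disjoint: "S3 n h \<inter> S4 n h = {}"
proof -
  have "k = k'"
    if "2/3 * (1/2)^k < y" "y \<le> (1/2::real)^k" "(1/2)^(k'+1) < y" "y \<le> 2/3 * (1/2::real)^k'"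
    for y k k'
  proof (rule dyadic_scale_unique[of "1/2" 1])
    have "1/2 * (1/2)^k < 2/3 * (1/2::real)^k"
      by simp
    with that show "1/2 * (1/2)^k < y"
      by linarith
    have "2/3 * (1/2)^k' \<le> 1 * (1/2::real)^k'"
      by simp
    with that show "y \<le> 1 * (1/2)^k'"
      by linarith
  qed (use that in auto)
  thus ?thesis
    unfolding S3_def S4_def by fastforce
qed

lemma h3_le: "j \<in> S3 n h \<Longrightarrow> h3 h j \<le> 3/2 * h j"
proof -
  assume "j \<in> S3 n h"
  then obtain k :: nat where k: "k \<ge> 1 \<and> 2/3 * (1/2)^k < h j \<and> h j \<le> (1/2)^k"
    unfolding S3_def by auto
  have "(THE k::nat. k \<ge> 1 \<and> 2/3 * (1/2)^k < h j \<and> h j \<le> (1/2)^k) = k"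
    using k dyadic_scale_unique[of "2/3" 1 _ "h j" k] by (intro the_equality) auto
  with k show ?thesis
    unfolding h3_def by simp
qed

lemma h4_le: "j \<in> S4 n h \<Longrightarrow> h4 h j \<le> 3/2 * h j"
proof -
  assume "j \<in> S4 n h"
  then obtain k :: nat where k: "k \<ge> 1 \<and> (1/2)^(k+1) < h j \<and> h j \<le> 2/3 * (1/2)^k"
    unfolding S4_def by auto
  have "(THE k::nat. k \<ge> 1 \<and> (1/2)^(k+1) < h j \<and> h j \<le> 2/3 * (1/2)^k) = k"
    using k dyadic_scale_unique[of "1/2" "2/3" _ "h j" k] by (intro the_equality) auto
  with k show ?thesis
    unfolding h4_def by simp
qed

text \<open>
  A, c, Q, f, x stand for \<pi>_1, |S_2|, \<pi>_3 + \<pi>_4, f_3 + f_4 and h^*. If z(a) exceeds the bound then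
  |S_2| > 3(\<pi>_1 + Q + f) - 5; the remaining estimate of z(b) is affine in h^* and is worst at
  h^* = 2/3.
\<close>
lemma min_choice_le:
  fixes A c Q f x ca cb s :: real
  assumes "1 \<le> A" "3 \<le> c" "A + Q \<le> c" "0 \<le> Q" "0 \<le> f" "f < 2"
    and "ca < f + 1" "cb < f + 3/2" "1/2 < x" "x \<le> 2/3"
    and s: "2/3 * A - 1/6 + x + c/2 + 2/3 * (Q + f) \<le> s"
  shows "min (A + c + Q + ca) (2 * x * (A + (c - 1)/2 + Q + cb)) \<le> 24/13 * s"
proof (cases "A + c + Q + ca \<le> 24/13 * s")
  case False
  define N where "N = A + c/2 + Q + f + 1"
  have "c > 3 * (A + Q + f) - 5"
    using False assms by argo
  hence key: "4/3 * N - 16/13 \<le> 24/13 * (s - x)"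
    using assms unfolding N_def by argo
  have "A + (c - 1)/2 + Q + cb \<le> N"
    using assms unfolding N_def by argo
  hence "2 * x * (A + (c - 1)/2 + Q + cb) \<le> 2 * x * N"
    using assms by (intro mult_left_mono) auto
  also have "\<dots> = x * (2 * N - 24/13) + 24/13 * x"
    by (simp add: algebra_simps)
  also have "\<dots> \<le> 2/3 * (2 * N - 24/13) + 24/13 * x"
    using assms unfolding N_def by (intro add_right_mono mult_right_mono) auto
  also have "\<dots> \<le> 24/13 * s"
    using key by argo
  finally show ?thesis
    by (rule min.coboundedI2)
qed (rule min.coboundedI1)

lemma sum_ge_member_plus_card:
  fixes f :: "'a \<Rightarrow> real"
  assumes "finite A" "a \<in> A" "\<forall>x\<in>A. b \<le> f x"
  shows "f a - b + b * card A \<le> sum f A"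
proof -
  have "f a - b \<le> (\<Sum>x\<in>A. f x - b)"
    using assms by (intro member_le_sum) auto
  thus ?thesis
    by (simp add: sum_subtractf mult.commute)
qed

lemma sum_rates_ge_classes:
  assumes "bgt_instance n h"
  shows "(\<Sum>j\<in>S1 n h. h j) + (\<Sum>j\<in>S2 n h. h j) + 2/3 * (sh3 n h + sh4 n h) \<le> (\<Sum>j\<in>{1..n}. h j)"
proof -
  let ?S = "S1 n h \<union> S2 n h \<union> S3 n h \<union> S4 n h"
  have sub: "?S \<subseteq> {1..n}"
    unfolding S1_def S2_def S3_def S4_def by blast
  hence fin: "finite (S1 n h)" "finite (S2 n h)" "finite (S3 n h)" "finite (S4 n h)"
    by (meson finite_atLeastAtMost finite_subset le_sup_iff)+
  have "\<forall>j\<in>S1 n h \<union> S2 n h. 1/2 < h j" "\<forall>j\<in>S3 n h \<union> S4 n h. h j \<le> 1/2"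
    "S1 n h \<inter> S2 n h = {}"
    unfolding S1_def S2_def S3_def S4_def by auto
  hence disj: "S1 n h \<inter> S2 n h = {}" "(S1 n h \<union> S2 n h) \<inter> S3 n h = {}"
    "(S1 n h \<union> S2 n h \<union> S3 n h) \<inter> S4 n h = {}"
    using S3_S4_disjoint[of n h] by (auto simp: disjoint_iff not_less[symmetric])
  have "sh3 n h \<le> 3/2 * (\<Sum>j\<in>S3 n h. h j)"
    unfolding sh3_def sum_distrib_left by (rule sum_mono) (rule h3_le)
  moreover have "sh4 n h \<le> 3/2 * (\<Sum>j\<in>S4 n h. h j)"
    unfolding sh4_def sum_distrib_left by (rule sum_mono) (rule h4_le)
  moreover have "(\<Sum>j\<in>?S. h j) \<le> (\<Sum>j\<in>{1..n}. h j)"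
    using sub bgt_instance_rate_pos[OF assms] by (intro sum_mono2) (auto intro: less_imp_le)
  moreover have "(\<Sum>j\<in>?S. h j) =
      (\<Sum>j\<in>S1 n h. h j) + (\<Sum>j\<in>S2 n h. h j) + (\<Sum>j\<in>S3 n h. h j) + (\<Sum>j\<in>S4 n h. h j)"
    using fin disj by (simp add: sum.union_disjoint)
  ultimately show ?thesis
    by argo
qed

lemma finite_S1: "finite (S1 n h)"
  unfolding S1_def by simp

lemma finite_S2: "finite (S2 n h)"
  unfolding S2_def by simp

lemma one_mem_S1: "bgt_instance n h \<Longrightarrow> 1 \<in> S1 n h"
  unfolding bgt_instance_def S1_def by simp

lemma sum_rates_lower_bound:
  assumes inst: "bgt_instance n h" and j: "j \<in> S2 n h"
  shows "2/3 * card (S1 n h) - 1/6 + h j + card (S2 n h) / 2 + 2/3 * (sh3 n h + sh4 n h)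
    \<le> (\<Sum>j\<in>{1..n}. h j)"
proof -
  have "h 1 - 2/3 + 2/3 * card (S1 n h) \<le> (\<Sum>j\<in>S1 n h. h j)"
    using finite_S1 one_mem_S1[OF inst] by (rule sum_ge_member_plus_card) (simp add: S1_def)
  moreover have "h j - 1/2 + 1/2 * card (S2 n h) \<le> (\<Sum>j\<in>S2 n h. h j)"
    using finite_S2 j by (rule sum_ge_member_plus_card) (simp add: S2_def)
  moreover have "h 1 = 1"
    using inst unfolding bgt_instance_def by simp
  ultimately show ?thesis
    using sum_rates_ge_classes[OF inst] by argo
qed

lemma pi3_nonneg: "0 \<le> pi3 n h"
  unfolding pi3_def sh3_def h3_def by (simp add: sum_nonneg)

lemma pi4_nonneg: "0 \<le> pi4 n h"
  unfolding pi4_def sh4_def h4_def by (simp add: sum_nonneg)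

lemma z_b_odd:
  assumes "S2 n h \<noteq> {}" "odd (card (S2 n h))"
  shows "z_b n h = ereal (2 * Max (h ` S2 n h) * (card (S1 n h) + (real (card (S2 n h)) - 1) / 2
    + real_of_int (pi3 n h + pi4 n h) + \<lceil>1/2 + (f3 n h + f4 n h)\<rceil>))"
proof -
  obtain m where m: "card (S2 n h) = 2 * m + 1"
    using assms(2) oddE by blast
  show ?thesis
    using assms unfolding z_b_def Let_def pi1_def m by (simp add: add.assoc)
qed

lemma H_PW_le_sum_rates:
  assumes inst: "bgt_instance n h"
    and large: "int (card (S2 n h)) > pi1 n h + pi3 n h + pi4 n h - 1"
    and "card (S2 n h) \<ge> 3" and "odd (card (S2 n h))"
  shows "H_PW n h \<le> ereal (24/13 * (\<Sum>j\<in>{1..n}. h j))"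
proof -
  have "S2 n h \<noteq> {}"
    using assms(3) by auto
  define x where "x = Max (h ` S2 n h)"
  have "x \<in> h ` S2 n h"
    unfolding x_def using finite_S2 \<open>S2 n h \<noteq> {}\<close> by (intro Max_in) auto
  then obtain j where j: "j \<in> S2 n h" "h j = x"
    by blast
  hence x: "1/2 < x" "x \<le> 2/3"
    unfolding S2_def by auto
  define f where "f = f3 n h + f4 n h"
  have f: "0 \<le> f" "f < 2"
    unfolding f_def f3_def f4_def pi3_def pi4_def by linarith+
  define A where "A = real (card (S1 n h))"
  define c where "c = real (card (S2 n h))"
  define Q where "Q = real_of_int (pi3 n h + pi4 n h)"
  have "0 < card (S1 n h)"
    using finite_S1 one_mem_S1[OF inst] by (auto simp: card_gt_0_iff)
  hence "1 \<le> A"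
    unfolding A_def by simp
  moreover have "A + Q \<le> c"
    using large unfolding A_def Q_def c_def pi1_def by linarith
  moreover have "0 \<le> Q"
    unfolding Q_def using pi3_nonneg[of n h] pi4_nonneg[of n h] by simp
  moreover have "2/3 * A - 1/6 + x + c/2 + 2/3 * (Q + f) \<le> (\<Sum>j\<in>{1..n}. h j)"
    using sum_rates_lower_bound[OF inst j(1)] j(2)
    unfolding A_def c_def Q_def f_def f3_def f4_def by simp
  ultimately have bound: "min (A + c + Q + \<lceil>f\<rceil>) (2 * x * (A + (c - 1)/2 + Q + \<lceil>1/2 + f\<rceil>))
      \<le> 24/13 * (\<Sum>j\<in>{1..n}. h j)"
    using x f assms(3) ceiling_correct[of f] ceiling_correct[of "1/2 + f"] unfolding c_def
    by (intro min_choice_le[of A _ Q f]) linarith+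
  have "z_a n h = A + c + Q + \<lceil>f\<rceil>"
    unfolding z_a_def A_def c_def Q_def pi1_def f_def by simp
  moreover have "z_b n h = ereal (2 * x * (A + (c - 1)/2 + Q + \<lceil>1/2 + f\<rceil>))"
    using z_b_odd[OF \<open>S2 n h \<noteq> {}\<close> assms(4)] unfolding x_def A_def c_def Q_def f_def .
  ultimately have "H_PW n h = ereal (min (A + c + Q + \<lceil>f\<rceil>) (2 * x * (A + (c - 1)/2 + Q + \<lceil>1/2 + f\<rceil>)))"
    unfolding H_PW_def by simp
  with bound show ?thesis
    by (simp del: ereal_min)
qed

theorem proposition4:
  fixes n :: nat and h :: "nat \<Rightarrow> real"
  assumes "bgt_instance n h"
    and "int (card (S2 n h)) > pi1 n h + pi3 n h + pi4 n h - 1"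
    and "card (S2 n h) \<ge> 3"
    and "odd (card (S2 n h))"
  shows "H_PW n h \<le> ereal (24/13) * Hstar n h"
proof -
  have "H_PW n h \<le> ereal (24/13) * ereal (\<Sum>j\<in>{1..n}. h j)"
    using H_PW_le_sum_rates[OF assms] by simp
  also have "\<dots> \<le> ereal (24/13) * Hstar n h"
    using sum_rates_le_Hstar bgt_instance_rate_pos[OF assms(1)]
    by (intro ereal_mult_left_mono) auto
  finally show ?thesis .
qed

end
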